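(* Let $1\le q<\infty$, $p=2q$, $\beta>-1/p$, $0<\delta<1/4$, and $\lambda>1$. Then there exists a function $f\in\mathbb B_p^{\beta,\beta}\cap\mathbb M_+^1$ such that \[ \Omega_\varphi^1(f,\delta)_{w_{\beta,\beta},q}\ge c\,\frac{\delta^{1/q}|\ln\delta|^{1/(2q)}}{|\ln|\ln\delta||^{\lambda/(2q)}}, \] where $c>0$ is independent of $\delta$.
   Context: For $x\in[-1,1]$, $\varphi(x)=\sqrt{1-x^2}$, $w_{\beta,\beta}(x)=(1-x^2)^\beta$; $\|\cdot\|_p$ is the $L_p[-1,1]$ norm, $\|g\|_{L_q(S)}$ the $L_q$ norm over $S$; $\mathbb B_p^{\beta,\beta}=\{f:\|w_{\beta,\beta}f\|_p=1\}$. $\Delta_h^1(f,x)=f(x+h/2)-f(x-h/2)$ if $x\pm h/2\in[-1,1]$, else $0$. For a weight $w$, $\Omega_\varphi^1(f,\delta)_{w,q}=\sup_{0<h\le\delta}\|w(x)\Delta^1_{h\varphi(x)}(f,x)\|_{L_q[-1+2h^2,1-2h^2]}$. $\mathbb M_+^1$ is the set of nondecreasing functions $f$ on $(-1,1)$ with $f(x)=0$ for $x\in(-1,0]$. *)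

theory Defs
  imports "HOL-Analysis.Analysis"
begin

definition phi :: "real \<Rightarrow> real" where
  "phi x = sqrt (1 - x\<^sup>2)"

definition wbb :: "real \<Rightarrow> real \<Rightarrow> real" where
  "wbb \<beta> x = (1 - x\<^sup>2) powr \<beta>"

text \<open>L_q norm over S (Lebesgue measure); an infinite integral is mapped to 0 by enn2real.\<close>
definition Lq_norm :: "real \<Rightarrow> real set \<Rightarrow> (real \<Rightarrow> real) \<Rightarrow> real" where
  "Lq_norm q S g = (enn2real (\<integral>\<^sup>+ x. indicator S x * ennreal (\<bar>g x\<bar> powr q) \<partial>lborel)) powr (1 / q)"

definition Delta1 :: "real \<Rightarrow> (real \<Rightarrow> real) \<Rightarrow> real \<Rightarrow> real" where
  "Delta1 h f x = (if -1 \<le> x - h / 2 \<and> x - h / 2 \<le> 1 \<and> -1 \<le> x + h / 2 \<and> x + h / 2 \<le> 1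
                   then f (x + h / 2) - f (x - h / 2) else 0)"

definition Omega1 :: "real \<Rightarrow> (real \<Rightarrow> real) \<Rightarrow> (real \<Rightarrow> real) \<Rightarrow> real \<Rightarrow> ereal" where
  "Omega1 q w f \<delta> = (SUP h\<in>{0<..\<delta>}.
      ereal (Lq_norm q {-1 + 2 * h\<^sup>2 .. 1 - 2 * h\<^sup>2} (\<lambda>x. w x * Delta1 (h * phi x) f x)))"

definition Bsphere :: "real \<Rightarrow> real \<Rightarrow> (real \<Rightarrow> real) set" where
  "Bsphere p \<beta> = {f. Lq_norm p {-1..1} (\<lambda>x. wbb \<beta> x * f x) = 1}"

definition Mplus1 :: "(real \<Rightarrow> real) set" where
  "Mplus1 = {f. mono_on {-1<..<1} f \<and> (\<forall>x\<in>{-1<..0}. f x = 0)}"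

end

theory Submission
  imports Defs
begin

text \<open>Put \<open>a = \<beta> + 1/(2q)\<close> and let \<open>g\<^sub>N\<close> be the increasing step function with jumps
  \<open>2^(j a) - 2^((j-1) a)\<close> at the points \<open>1 - 2^-j\<close>, \<open>j = 1..N\<close>, where \<open>2^N\<close> is about \<open>\<delta>^-2\<close>.
  Below the last knot \<open>|w g\<^sub>N|^(2q)\<close> is at most a constant times \<open>1/(1-x)\<close>, so the weighted
  \<open>L\<^sub>2\<^sub>q\<close> norm of \<open>g\<^sub>N\<close> is \<open>O(N^(1/(2q)))\<close>. On a window of length about \<open>\<delta> 2^(-k/2)\<close> to the
  right of the \<open>k\<close>-th knot the symmetric difference with step \<open>\<delta> \<phi>(x)\<close> contains the \<open>k\<close>-th jump,
  so \<open>|w \<Delta> g\<^sub>N|^q\<close> is of order at least \<open>2^(k/2)\<close> there; the \<open>N\<close> windows are disjoint and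
  contribute of order \<open>N \<delta>\<close> to the integral. Normalizing \<open>g\<^sub>N\<close> therefore gives a modulus of order
  at least \<open>(N \<delta>)^(1/q) / N^(1/(2q))\<close>, i.e. \<open>\<delta>^(1/q) |ln \<delta>|^(1/(2q))\<close>. This is stronger than the
  claim, since \<open>|ln |ln \<delta>|| \<ge> ln (ln 4) > 0\<close>.\<close>

lemma wbb_borel [measurable]: "wbb \<beta> \<in> borel_measurable borel"
  unfolding wbb_def by measurable

lemma phi_borel [measurable]: "phi \<in> borel_measurable borel"
  unfolding phi_def by measurable

lemma Delta1_borel [measurable]:
  assumes [measurable]: "f \<in> borel_measurable borel" "g \<in> borel_measurable borel"
  shows "(\<lambda>x. Delta1 (g x) f x) \<in> borel_measurable borel"
  unfolding Delta1_def by measurable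

lemma Delta1_divide: "Delta1 h (\<lambda>x. f x / c) x = Delta1 h f x / c"
  unfolding Delta1_def by (simp add: diff_divide_distrib)

lemma powr_between_endpoints:
  fixes a b u c :: real
  assumes "0 < a" "a \<le> u" "u \<le> b"
  shows "min (a powr c) (b powr c) \<le> u powr c" "u powr c \<le> max (a powr c) (b powr c)"
proof -
  have "(c \<ge> 0 \<longrightarrow> a powr c \<le> u powr c \<and> u powr c \<le> b powr c) \<and>
        (c < 0 \<longrightarrow> b powr c \<le> u powr c \<and> u powr c \<le> a powr c)"
    using assms by (auto intro: powr_mono2 powr_mono2')
  then show "min (a powr c) (b powr c) \<le> u powr c" "u powr c \<le> max (a powr c) (b powr c)"
    by (cases "c \<ge> 0"; auto)+
qed

lemma one_minus_square_bounds:
  fixes x :: real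
  assumes "0 \<le> x" "x \<le> 1"
  shows "1 - x \<le> 1 - x^2" "1 - x^2 \<le> 2 * (1 - x)"
proof -
  have "1 - x^2 = (1 - x) * (1 + x)" by (simp add: power2_eq_square algebra_simps)
  moreover have "(1 - x) * 1 \<le> (1 - x) * (1 + x)" "(1 - x) * (1 + x) \<le> (1 - x) * 2"
    using assms by (intro mult_left_mono; simp)+
  ultimately show "1 - x \<le> 1 - x^2" "1 - x^2 \<le> 2 * (1 - x)" by (simp_all add: mult.commute)
qed

subsection \<open>The \<open>L\<^sub>q\<close> norm\<close>

lemma Lq_norm_divide:
  assumes "c > 0" "q > 0" and [measurable]: "g \<in> borel_measurable borel" "S \<in> sets borel"
  shows "Lq_norm q S (\<lambda>x. g x / c) = Lq_norm q S g / c"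
proof -
  define X where "X = enn2real (\<integral>\<^sup>+ x. indicator S x * ennreal (\<bar>g x\<bar> powr q) \<partial>lborel)"
  have "(\<integral>\<^sup>+ x. indicator S x * ennreal (\<bar>g x / c\<bar> powr q) \<partial>lborel)
      = (\<integral>\<^sup>+ x. ennreal (c powr (-q)) * (indicator S x * ennreal (\<bar>g x\<bar> powr q)) \<partial>lborel)"
    using assms(1) by (intro nn_integral_cong)
      (auto simp: abs_divide powr_divide powr_minus divide_simps ennreal_mult'[symmetric] indicator_def)
  also have "\<dots> = ennreal (c powr (-q)) * (\<integral>\<^sup>+ x. indicator S x * ennreal (\<bar>g x\<bar> powr q) \<partial>lborel)"
    by (rule nn_integral_cmult) measurable
  finally have "Lq_norm q S (\<lambda>x. g x / c) = (c powr (-q) * X) powr (1/q)"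
    unfolding Lq_norm_def X_def by (simp add: enn2real_mult)
  also have "\<dots> = (c powr (-q)) powr (1/q) * X powr (1/q)"
    unfolding X_def by (simp add: powr_mult)
  also have "(c powr (-q)) powr (1/q) = 1 / c"
    using assms by (simp only: powr_powr) (simp add: powr_minus_divide)
  finally show ?thesis unfolding Lq_norm_def X_def by simp
qed

lemma Lq_norm_ge_powr:
  assumes "ennreal a \<le> (\<integral>\<^sup>+ x. indicator S x * ennreal (\<bar>g x\<bar> powr q) \<partial>lborel)"
    and "(\<integral>\<^sup>+ x. indicator S x * ennreal (\<bar>g x\<bar> powr q) \<partial>lborel) < \<infinity>"
    and "0 \<le> a" "0 < q"
  shows "a powr (1 / q) \<le> Lq_norm q S g"
proof -
  have "a \<le> enn2real (\<integral>\<^sup>+ x. indicator S x * ennreal (\<bar>g x\<bar> powr q) \<partial>lborel)"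
    using enn2real_mono[OF assms(1)] assms(2,3) by (simp add: infinity_ennreal_def)
  then show ?thesis unfolding Lq_norm_def using assms(3,4) by (intro powr_mono2) auto
qed

lemma Lq_norm_le_powr:
  assumes "(\<integral>\<^sup>+ x. indicator S x * ennreal (\<bar>g x\<bar> powr q) \<partial>lborel) \<le> ennreal b"
    and "0 \<le> b" "0 < q"
  shows "Lq_norm q S g \<le> b powr (1 / q)"
proof -
  have "enn2real (\<integral>\<^sup>+ x. indicator S x * ennreal (\<bar>g x\<bar> powr q) \<partial>lborel) \<le> b"
    using enn2real_mono[OF assms(1)] assms(2) by simp
  then show ?thesis unfolding Lq_norm_def using assms(3) by (intro powr_mono2) auto
qed

lemma Lq_norm_pos:
  assumes "0 < (\<integral>\<^sup>+ x. indicator S x * ennreal (\<bar>g x\<bar> powr q) \<partial>lborel)"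
    and "(\<integral>\<^sup>+ x. indicator S x * ennreal (\<bar>g x\<bar> powr q) \<partial>lborel) < \<infinity>"
  shows "0 < Lq_norm q S g"
  using assms unfolding Lq_norm_def by (auto simp: enn2real_eq_0_iff top_unique)

subsection \<open>The staircase\<close>

definition dyadic_knot :: "nat \<Rightarrow> real" where
  "dyadic_knot j = 1 - 1 / 2 ^ j"

definition staircase_jump :: "real \<Rightarrow> nat \<Rightarrow> real" where
  "staircase_jump \<alpha> j = (2 ^ j) powr \<alpha> - (2 ^ (j - 1)) powr \<alpha>"

text \<open>A step function below \<open>min (1 / (1 - x)) (2 ^ N) powr \<alpha>\<close>, equal to it minus \<open>1\<close> at the knots.\<close>
definition staircase :: "real \<Rightarrow> nat \<Rightarrow> real \<Rightarrow> real" where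
  "staircase \<alpha> N x = (\<Sum>j\<in>{1..N}. staircase_jump \<alpha> j * (if dyadic_knot j \<le> x then 1 else 0))"

lemma staircase_borel [measurable]: "staircase \<alpha> N \<in> borel_measurable borel"
  unfolding staircase_def by measurable

lemma staircase_jump_nonneg: "\<alpha> > 0 \<Longrightarrow> staircase_jump \<alpha> j \<ge> 0"
  unfolding staircase_jump_def by (auto intro!: powr_mono2 simp: power_increasing)

lemma staircase_jump_eq:
  assumes "\<alpha> > 0" "j \<ge> 1"
  shows "staircase_jump \<alpha> j = (2 ^ j) powr \<alpha> * (1 - 2 powr (-\<alpha>))"
proof -
  have "(2::real) ^ j = 2 ^ (j - 1) * 2" using assms by (cases j) auto
  then have "((2::real) ^ j) powr \<alpha> = (2 ^ (j - 1)) powr \<alpha> * 2 powr \<alpha>"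
    by (simp add: powr_mult)
  then show ?thesis unfolding staircase_jump_def by (simp add: powr_minus divide_simps algebra_simps)
qed

lemma dyadic_knot_ge_half: "j \<ge> 1 \<Longrightarrow> dyadic_knot j \<ge> 1 / 2"
  using power_increasing[of 1 j "2::real"] unfolding dyadic_knot_def by (simp add: divide_simps)

lemma dyadic_knot_le_iff: "x < 1 \<Longrightarrow> dyadic_knot j \<le> x \<longleftrightarrow> 2 ^ j \<le> 1 / (1 - x)"
  unfolding dyadic_knot_def by (auto simp: divide_simps algebra_simps)

lemma dyadic_knot_Suc: "dyadic_knot j + 1 / 2 ^ (j + 1) = dyadic_knot (Suc j)"
  unfolding dyadic_knot_def by (simp add: divide_simps)

lemma dyadic_knot_mono: "i \<le> j \<Longrightarrow> dyadic_knot i \<le> dyadic_knot j"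
  using power_increasing[of i j "2::real"] unfolding dyadic_knot_def by (simp add: frac_le)

lemma staircase_nonneg: "\<alpha> > 0 \<Longrightarrow> staircase \<alpha> N x \<ge> 0"
  unfolding staircase_def by (auto intro!: sum_nonneg staircase_jump_nonneg)

lemma staircase_mono: "\<alpha> > 0 \<Longrightarrow> x \<le> y \<Longrightarrow> staircase \<alpha> N x \<le> staircase \<alpha> N y"
  unfolding staircase_def by (intro sum_mono) (auto intro!: staircase_jump_nonneg)

lemma staircase_eq_0: "x < 1 / 2 \<Longrightarrow> staircase \<alpha> N x = 0"
  unfolding staircase_def using dyadic_knot_ge_half by (intro sum.neutral) force

text \<open>The jumps telescope.\<close>
lemma sum_staircase_jump_le:
  assumes "\<alpha> > 0" "R \<ge> 1"
  shows "(\<Sum>j\<in>{1..N}. staircase_jump \<alpha> j * (if 2 ^ j \<le> R then 1 else 0)) \<le> min R (2 ^ N) powr \<alpha> - 1"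
proof (induction N)
  case 0
  then show ?case using assms by simp
next
  case (Suc N)
  show ?case
  proof (cases "2 ^ Suc N \<le> R")
    case True
    then have "(2::real) ^ N \<le> R" by (smt (verit) power_increasing_iff lessI less_imp_le one_le_numeral)
    then show ?thesis using Suc True by (simp add: staircase_jump_def)
  next
    case False
    have "min R (2 ^ N) powr \<alpha> \<le> min R (2 ^ Suc N) powr \<alpha>"
      using assms by (intro powr_mono2) (auto simp: min_def)
    then show ?thesis using Suc False by simp
  qed
qed

lemma staircase_le_min:
  assumes "\<alpha> > 0" "0 \<le> x" "x < 1"
  shows "staircase \<alpha> N x \<le> min (1 / (1 - x)) (2 ^ N) powr \<alpha>"
proof -
  have "staircase \<alpha> N x = (\<Sum>j\<in>{1..N}. staircase_jump \<alpha> j * (if 2 ^ j \<le> 1 / (1 - x) then 1 else 0))"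
    unfolding staircase_def using dyadic_knot_le_iff[OF assms(3)] by simp
  also have "\<dots> \<le> min (1 / (1 - x)) (2 ^ N) powr \<alpha> - 1"
    using assms by (intro sum_staircase_jump_le) (auto simp: divide_simps)
  finally show ?thesis by simp
qed

lemma staircase_le:
  assumes "\<alpha> > 0"
  shows "staircase \<alpha> N x \<le> (2 ^ N) powr \<alpha>"
proof -
  have "staircase \<alpha> N x \<le> (\<Sum>j\<in>{1..N}. staircase_jump \<alpha> j * (if 2 ^ j \<le> (2::real) ^ N then 1 else 0))"
    unfolding staircase_def using assms
    by (intro sum_mono) (auto intro!: staircase_jump_nonneg simp: power_increasing)
  also have "\<dots> \<le> min (2 ^ N) (2 ^ N) powr \<alpha> - 1"
    using assms by (intro sum_staircase_jump_le) auto
  finally show ?thesis by simp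
qed

lemma staircase_ge_jump:
  assumes "\<alpha> > 0" "k \<in> {1..N}" "dyadic_knot k \<le> x"
  shows "staircase_jump \<alpha> k \<le> staircase \<alpha> N x"
proof -
  have "staircase_jump \<alpha> k = staircase_jump \<alpha> k * (if dyadic_knot k \<le> x then 1 else 0)"
    using assms by simp
  also have "\<dots> \<le> staircase \<alpha> N x"
    unfolding staircase_def using assms staircase_jump_nonneg by (intro member_le_sum) auto
  finally show ?thesis .
qed

subsection \<open>The weighted norm of the staircase\<close>

lemma has_integral_inverse_one_minus:
  fixes a b :: real
  assumes "a \<le> b" "b < 1"
  shows "((\<lambda>x. 1 / (1 - x)) has_integral (ln (1 - a) - ln (1 - b))) {a..b}"
proof -
  have "((\<lambda>x. 1 / (1 - x)) has_integral ((\<lambda>x. - ln (1 - x)) b - (\<lambda>x. - ln (1 - x)) a)) {a..b}"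
  proof (rule fundamental_theorem_of_calculus[OF assms(1)])
    fix x assume "x \<in> {a..b}"
    then have "((\<lambda>x. - ln (1 - x)) has_real_derivative (1 / (1 - x))) (at x within {a..b})"
      using assms by (auto intro!: derivative_eq_intros simp: divide_simps)
    then show "((\<lambda>x. - ln (1 - x)) has_vector_derivative (1 / (1 - x))) (at x within {a..b})"
      by (simp add: has_real_derivative_iff_has_vector_derivative)
  qed
  then show ?thesis by simp
qed

lemma has_integral_one_minus_powr:
  fixes a \<gamma> :: real
  assumes "a \<le> 1" "\<gamma> > -1"
  shows "((\<lambda>x. (1 - x) powr \<gamma>) has_integral ((1 - a) powr (\<gamma> + 1) / (\<gamma> + 1))) {a..1}"
proof -
  let ?F = "\<lambda>x. - ((1 - x) powr (\<gamma> + 1) / (\<gamma> + 1))"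
  have "((\<lambda>x. (1 - x) powr \<gamma>) has_integral (?F 1 - ?F a)) {a..1}"
  proof (rule fundamental_theorem_of_calculus_interior[OF assms(1)])
    show "continuous_on {a..1} ?F"
      using assms by (intro continuous_intros continuous_on_powr') auto
  next
    fix x assume "x \<in> {a<..<1}"
    then have "(?F has_real_derivative ((1 - x) powr \<gamma>)) (at x)"
      using assms by (auto intro!: derivative_eq_intros simp: divide_simps)
    then show "(?F has_vector_derivative ((1 - x) powr \<gamma>)) (at x)"
      by (simp add: has_real_derivative_iff_has_vector_derivative)
  qed
  then show ?thesis using assms by simp
qed

text \<open>With \<open>\<gamma> = p * \<beta>\<close> this dominates \<open>\<bar>wbb \<beta> * staircase (\<beta> + 1 / p) N\<bar> powr p\<close> on \<open>[1/2, 1)\<close>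
  up to a constant: the bound \<open>1 / (1 - x)\<close> below the last knot, the weight alone above it.\<close>
definition staircase_majorant :: "real \<Rightarrow> nat \<Rightarrow> real \<Rightarrow> real" where
  "staircase_majorant \<gamma> N x =
     (if x < 1 - 1 / 2 ^ N then 1 / (1 - x) else (2 ^ N) powr (\<gamma> + 1) * (1 - x) powr \<gamma>)"

lemma staircase_majorant_nonneg: "x \<le> 1 \<Longrightarrow> staircase_majorant \<gamma> N x \<ge> 0"
  unfolding staircase_majorant_def by (auto simp: divide_simps)

lemma staircase_majorant_has_integral:
  assumes "\<gamma> > -1" "N \<ge> 1"
  shows "(staircase_majorant \<gamma> N has_integral ((real N - 1) * ln 2 + 1 / (\<gamma> + 1))) {1/2..1}"
proof -
  define m :: real where "m = 1 - 1 / 2 ^ N"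
  have m: "1/2 \<le> m" "m < 1"
    using dyadic_knot_ge_half[OF assms(2)] unfolding m_def dyadic_knot_def by auto
  have "((\<lambda>x. 1 / (1 - x)) has_integral (ln (1 - 1/2) - ln (1 - m))) {1/2..m}"
    by (rule has_integral_inverse_one_minus) (use m in auto)
  moreover have "ln (1 - 1/2) - ln (1 - m) = (real N - 1) * ln 2"
    unfolding m_def by (simp add: ln_div ln_realpow algebra_simps)
  ultimately have "((\<lambda>x. 1 / (1 - x)) has_integral ((real N - 1) * ln 2)) {1/2..m}"
    by simp
  then have A: "(staircase_majorant \<gamma> N has_integral ((real N - 1) * ln 2)) {1/2..m}"
    by (rule has_integral_spike_finite[where S="{m}", rotated 2]) (auto simp: staircase_majorant_def m_def)
  have "((\<lambda>x. (1 - x) powr \<gamma>) has_integral ((1 - m) powr (\<gamma> + 1) / (\<gamma> + 1))) {m..1}"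
    by (rule has_integral_one_minus_powr) (use m assms in auto)
  then have "((\<lambda>x. (2 ^ N) powr (\<gamma> + 1) * (1 - x) powr \<gamma>) has_integral
      ((2 ^ N) powr (\<gamma> + 1) * ((1 - m) powr (\<gamma> + 1) / (\<gamma> + 1)))) {m..1}"
    by (intro has_integral_mult_right)
  moreover have "(2 ^ N) powr (\<gamma> + 1) * (1 - m) powr (\<gamma> + 1) = 1"
    unfolding m_def by (simp add: powr_mult[symmetric])
  ultimately have "((\<lambda>x. (2 ^ N) powr (\<gamma> + 1) * (1 - x) powr \<gamma>) has_integral (1 / (\<gamma> + 1))) {m..1}"
    by (simp add: divide_simps)
  then have B: "(staircase_majorant \<gamma> N has_integral (1 / (\<gamma> + 1))) {m..1}"
    by (rule has_integral_spike_finite[where S="{}", rotated 2]) (auto simp: staircase_majorant_def m_def)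
  have "(staircase_majorant \<gamma> N has_integral ((real N - 1) * ln 2 + 1 / (\<gamma> + 1))) {1/2..1}"
    by (rule has_integral_combine[OF m(1) _ A B]) (use m in auto)
  then show ?thesis .
qed

lemma weighted_staircase_powr_le_majorant:
  fixes p \<beta> x :: real
  assumes p: "p > 0" and \<beta>: "\<beta> > -1 / p" and x: "1/2 \<le> x" "x < 1"
  shows "\<bar>wbb \<beta> x * staircase (\<beta> + 1 / p) N x\<bar> powr p
         \<le> max 1 (2 powr (p * \<beta>)) * staircase_majorant (p * \<beta>) N x"
proof -
  define \<alpha> where "\<alpha> = \<beta> + 1 / p"
  define \<gamma> where "\<gamma> = p * \<beta>"
  define K where "K = max 1 (2 powr \<gamma>)"
  have \<alpha>: "\<alpha> > 0" "\<alpha> * p = \<gamma> + 1"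
    using \<beta> p unfolding \<alpha>_def \<gamma>_def by (auto simp: field_simps)
  have G: "staircase \<alpha> N x \<ge> 0" using staircase_nonneg \<alpha> by simp
  have split: "\<bar>wbb \<beta> x * staircase \<alpha> N x\<bar> powr p
      = (1 - x) powr \<gamma> * (1 + x) powr \<gamma> * staircase \<alpha> N x powr p"
  proof -
    have "\<bar>wbb \<beta> x * staircase \<alpha> N x\<bar> powr p = (1 - x^2) powr \<gamma> * staircase \<alpha> N x powr p"
      using G x unfolding wbb_def \<gamma>_def by (simp add: powr_mult powr_powr mult.commute)
    moreover have "1 - x^2 = (1 - x) * (1 + x)" by (simp add: power2_eq_square algebra_simps)
    ultimately show ?thesis using x by (simp add: powr_mult)
  qed
  have K: "(1 + x) powr \<gamma> \<le> K"
    using powr_between_endpoints(2)[of 1 "1 + x" 2 \<gamma>] x unfolding K_def by auto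
  have "staircase \<alpha> N x powr p \<le> (min (1 / (1 - x)) (2 ^ N) powr \<alpha>) powr p"
    using staircase_le_min[OF \<alpha>(1), of x N] x G p by (intro powr_mono2) auto
  also have "\<dots> = min (1 / (1 - x)) (2 ^ N) powr (\<gamma> + 1)"
    using \<alpha>(2) by (simp add: powr_powr)
  finally have Gp: "staircase \<alpha> N x powr p \<le> min (1 / (1 - x)) (2 ^ N) powr (\<gamma> + 1)" .
  have M: "(1 - x) powr \<gamma> * min (1 / (1 - x)) (2 ^ N) powr (\<gamma> + 1) \<le> staircase_majorant \<gamma> N x"
  proof (cases "x < 1 - 1 / 2 ^ N")
    case True
    then have "min (1 / (1 - x)) (2 ^ N) = 1 / (1 - x)"
      using x by (auto simp: divide_simps algebra_simps)
    moreover have "(1 - x) powr \<gamma> * (1 / (1 - x)) powr (\<gamma> + 1) = 1 / (1 - x)"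
      using x by (simp add: powr_divide powr_add divide_simps)
    ultimately show ?thesis using True unfolding staircase_majorant_def by simp
  next
    case False
    have "min (1 / (1 - x)) (2 ^ N) powr (\<gamma> + 1) \<le> (2 ^ N) powr (\<gamma> + 1)"
      using x \<alpha> p by (intro powr_mono2) (auto simp: min_def simp flip: \<alpha>(2))
    then show ?thesis using False unfolding staircase_majorant_def
      by (simp add: mult_right_mono mult.commute[of "(1 - x) powr \<gamma>"])
  qed
  have "\<bar>wbb \<beta> x * staircase \<alpha> N x\<bar> powr p
      \<le> (1 - x) powr \<gamma> * K * min (1 / (1 - x)) (2 ^ N) powr (\<gamma> + 1)"
    unfolding split using K Gp by (intro mult_mono mult_left_mono) (auto simp: K_def)
  also have "\<dots> \<le> K * staircase_majorant \<gamma> N x"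
    using mult_left_mono[OF M, of K] by (simp add: K_def algebra_simps)
  finally show ?thesis unfolding \<alpha>_def \<gamma>_def K_def .
qed

lemma nn_integral_weighted_staircase_le:
  fixes p \<beta> :: real
  assumes p: "p > 0" and \<beta>: "\<beta> > -1 / p" and N: "N \<ge> 1"
  shows "(\<integral>\<^sup>+ x. indicator {-1..1} x * ennreal (\<bar>wbb \<beta> x * staircase (\<beta> + 1 / p) N x\<bar> powr p) \<partial>lborel)
     \<le> ennreal (max 1 (2 powr (p * \<beta>)) * ((real N - 1) * ln 2 + 1 / (p * \<beta> + 1)))"
proof -
  define K where "K = max 1 (2 powr (p * \<beta>))"
  have \<gamma>: "p * \<beta> > -1" using \<beta> p by (simp add: field_simps)
  have "(\<integral>\<^sup>+ x. indicator {-1..1} x * ennreal (\<bar>wbb \<beta> x * staircase (\<beta> + 1 / p) N x\<bar> powr p) \<partial>lborel)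
     \<le> (\<integral>\<^sup>+ x. ennreal (K * staircase_majorant (p * \<beta>) N x) * indicator {1/2..1} x \<partial>lborel)"
  proof (rule nn_integral_mono)
    fix x :: real
    consider "x < 1/2" | "1/2 \<le> x \<and> x < 1" | "x = 1" | "x > 1" by linarith
    then show "indicator {-1..1} x * ennreal (\<bar>wbb \<beta> x * staircase (\<beta> + 1 / p) N x\<bar> powr p)
       \<le> ennreal (K * staircase_majorant (p * \<beta>) N x) * indicator {1/2..1} x"
    proof cases
      case 2
      then show ?thesis using weighted_staircase_powr_le_majorant[OF p \<beta>, of x N] unfolding K_def
        by (auto simp: indicator_def intro!: ennreal_leI)
    qed (simp_all add: staircase_eq_0 wbb_def indicator_def)
  qed
  also have "\<dots> = ennreal (K * ((real N - 1) * ln 2 + 1 / (p * \<beta> + 1)))"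
    using has_integral_mult_right[OF staircase_majorant_has_integral[OF \<gamma> N], of K]
      staircase_majorant_nonneg
    by (intro nn_integral_has_integral_lebesgue') (auto simp: K_def)
  finally show ?thesis unfolding K_def .
qed

text \<open>On \<open>[1/2, 3/4]\<close> the weight is bounded below and the staircase has passed its first jump.\<close>
lemma nn_integral_weighted_staircase_pos:
  fixes p \<beta> :: real
  assumes p: "p > 0" and \<beta>: "\<beta> > -1 / p" and N: "N \<ge> 1"
  shows "0 < (\<integral>\<^sup>+ x. indicator {-1..1} x * ennreal (\<bar>wbb \<beta> x * staircase (\<beta> + 1 / p) N x\<bar> powr p) \<partial>lborel)"
proof -
  define \<alpha> where "\<alpha> = \<beta> + 1 / p"
  define c where "c = (min ((1/4) powr \<beta>) 1 * staircase_jump \<alpha> 1) powr p"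
  have \<alpha>: "\<alpha> > 0" unfolding \<alpha>_def using \<beta> by simp
  have c: "c > 0"
    unfolding c_def staircase_jump_def using \<alpha> by (simp add: min_def)
  have "0 < ennreal (c * (1/4))" using c by simp
  also have "ennreal (c * (1/4)) = (\<integral>\<^sup>+ x. ennreal c * indicator {1/2..3/4::real} x \<partial>lborel)"
    using c by (simp add: nn_integral_cmult_indicator ennreal_mult[symmetric])
  also have "\<dots> \<le> (\<integral>\<^sup>+ x. indicator {-1..1} x * ennreal (\<bar>wbb \<beta> x * staircase \<alpha> N x\<bar> powr p) \<partial>lborel)"
  proof (rule nn_integral_mono)
    fix x :: real
    show "ennreal c * indicator {1/2..3/4} x
      \<le> indicator {-1..1} x * ennreal (\<bar>wbb \<beta> x * staircase \<alpha> N x\<bar> powr p)"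
    proof (cases "x \<in> {1/2..3/4}")
      case True
      have "x * x \<le> (3/4) * (3/4)" using True by (intro mult_mono) auto
      then have "1/4 \<le> 1 - x^2" "1 - x^2 \<le> 1" by (auto simp: power2_eq_square)
      then have w: "min ((1/4) powr \<beta>) 1 \<le> wbb \<beta> x"
        using powr_between_endpoints(1)[of "1/4" "1 - x^2" 1 \<beta>] unfolding wbb_def by simp
      have G: "staircase_jump \<alpha> 1 \<le> staircase \<alpha> N x"
        using True N by (intro staircase_ge_jump[OF \<alpha>]) (auto simp: dyadic_knot_def)
      have "min ((1/4) powr \<beta>) 1 * staircase_jump \<alpha> 1 \<le> \<bar>wbb \<beta> x * staircase \<alpha> N x\<bar>"
        using w G staircase_jump_nonneg[OF \<alpha>] by (simp add: abs_mult mult_mono)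
      then have "c \<le> \<bar>wbb \<beta> x * staircase \<alpha> N x\<bar> powr p" unfolding c_def
        using p staircase_jump_nonneg[OF \<alpha>] by (intro powr_mono2) auto
      then show ?thesis using True by (auto simp: indicator_def intro!: ennreal_leI)
    qed simp
  qed
  finally show ?thesis unfolding \<alpha>_def .
qed

lemma weighted_staircase_norm_pos:
  fixes p \<beta> :: real
  assumes "p > 0" "\<beta> > -1 / p" "N \<ge> 1"
  shows "0 < Lq_norm p {-1..1} (\<lambda>x. wbb \<beta> x * staircase (\<beta> + 1 / p) N x)"
  using nn_integral_weighted_staircase_pos[OF assms]
    le_less_trans[OF nn_integral_weighted_staircase_le[OF assms]]
  by (intro Lq_norm_pos) auto

lemma weighted_staircase_norm_le:
  fixes p \<beta> :: real
  assumes p: "p > 0" and \<beta>: "\<beta> > -1 / p"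
  obtains C where "C > 0"
    and "\<And>N. N \<ge> 1 \<Longrightarrow> Lq_norm p {-1..1} (\<lambda>x. wbb \<beta> x * staircase (\<beta> + 1 / p) N x) \<le> (C * N) powr (1 / p)"
proof
  define K where "K = max 1 (2 powr (p * \<beta>))"
  have \<gamma>: "p * \<beta> + 1 > 0" using \<beta> p by (simp add: field_simps)
  show "K * (ln 2 + 1 / (p * \<beta> + 1)) > 0" unfolding K_def using \<gamma> by (simp add: add_pos_pos)
  fix N :: nat assume N: "N \<ge> 1"
  have "1 / (p * \<beta> + 1) \<le> real N * (1 / (p * \<beta> + 1))"
    using mult_right_mono[of 1 "real N" "1 / (p * \<beta> + 1)"] N \<gamma> by simp
  then have "K * ((real N - 1) * ln 2 + 1 / (p * \<beta> + 1)) \<le> K * (real N * ln 2 + real N * (1 / (p * \<beta> + 1)))"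
    unfolding K_def by (intro mult_left_mono add_mono) auto
  also have "\<dots> = K * (ln 2 + 1 / (p * \<beta> + 1)) * real N" by (simp add: algebra_simps)
  finally have "(\<integral>\<^sup>+ x. indicator {-1..1} x * ennreal (\<bar>wbb \<beta> x * staircase (\<beta> + 1 / p) N x\<bar> powr p) \<partial>lborel)
      \<le> ennreal (K * (ln 2 + 1 / (p * \<beta> + 1)) * N)"
    using nn_integral_weighted_staircase_le[OF p \<beta> N] unfolding K_def
    by (auto intro: order.trans ennreal_leI)
  then show "Lq_norm p {-1..1} (\<lambda>x. wbb \<beta> x * staircase (\<beta> + 1 / p) N x)
      \<le> (K * (ln 2 + 1 / (p * \<beta> + 1)) * N) powr (1 / p)"
    using p \<gamma> unfolding K_def by (intro Lq_norm_le_powr) (auto intro!: mult_nonneg_nonneg add_nonneg_nonneg)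
qed

subsection \<open>The windows\<close>

text \<open>For \<open>x\<close> in \<open>[dyadic_knot k, dyadic_knot k + window_length h k)\<close> one has
  \<open>h * phi x / 2 \<ge> window_length h k\<close>, so the symmetric difference with step \<open>h * phi x\<close> straddles
  the \<open>k\<close>-th knot and picks up the \<open>k\<close>-th jump of the staircase.\<close>
definition window_length :: "real \<Rightarrow> nat \<Rightarrow> real" where
  "window_length h k = h / 2 * sqrt (1 / 2 ^ (k + 1))"

lemma window_length_le:
  assumes "0 < h" "2 ^ k * (4 * h^2) \<le> 1"
  shows "window_length h k \<le> 1 / 2 ^ (k + 1)"
proof -
  have "h / 2 \<le> sqrt (1 / 2 ^ (k + 1))"
    using assms by (intro real_le_rsqrt) (simp add: power_divide divide_simps algebra_simps)
  then have "h / 2 * sqrt (1 / 2 ^ (k + 1)) \<le> sqrt (1 / 2 ^ (k + 1)) * sqrt (1 / 2 ^ (k + 1))"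
    by (intro mult_right_mono) auto
  then show ?thesis unfolding window_length_def by simp
qed

lemma windows_disjoint:
  assumes h: "0 < h" and hj: "2 ^ j * (4 * h^2) \<le> 1" and hk: "2 ^ k * (4 * h^2) \<le> 1" and "j < k"
  shows "dyadic_knot j + window_length h j \<le> dyadic_knot k"
proof -
  have "dyadic_knot j + window_length h j \<le> dyadic_knot (Suc j)"
    using window_length_le[OF h hj] dyadic_knot_Suc[of j] by linarith
  also have "\<dots> \<le> dyadic_knot k" using \<open>j < k\<close> by (intro dyadic_knot_mono) auto
  finally show ?thesis .
qed

context
  fixes h x :: real and k :: nat
  assumes h: "0 < h" and k: "1 \<le> k" and hk: "2 ^ k * (4 * h^2) \<le> 1"
    and x: "dyadic_knot k \<le> x" "x < dyadic_knot k + window_length h k"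
begin

lemma window_one_minus_bounds: "1 / 2 ^ (k + 1) \<le> 1 - x" "1 - x \<le> 1 / 2 ^ k"
  using x window_length_le[OF h hk] unfolding dyadic_knot_def by (auto simp: field_simps)

lemma window_scale_bounds: "2 * h^2 \<le> 1 / 2 ^ (k + 1)" "1 / 2 ^ k \<le> (1::real) / 2"
  using hk power_increasing[OF k, of "2::real"] by (auto simp: field_simps)

lemma window_in_domain: "x \<in> {-1 + 2 * h^2 .. 1 - 2 * h^2}" "1/2 \<le> x" "x < 1"
proof -
  have "0 < (1::real) / 2 ^ (k + 1)" by simp
  then show "x \<in> {-1 + 2 * h^2 .. 1 - 2 * h^2}" "1/2 \<le> x" "x < 1"
    using window_one_minus_bounds window_scale_bounds by (simp_all only: atLeastAtMost_iff; linarith)+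
qed

lemma window_weight_bounds: "1 / 2 ^ (k + 1) \<le> 1 - x^2" "1 - x^2 \<le> 2 / 2 ^ k"
  using one_minus_square_bounds[of x] window_in_domain window_one_minus_bounds by auto

lemma window_straddles_knot:
  "-1 \<le> x - h * phi x / 2" "x - h * phi x / 2 < dyadic_knot k"
  "dyadic_knot k \<le> x + h * phi x / 2" "x + h * phi x / 2 \<le> 1"
proof -
  define s where "s = 1 - x"
  have "0 < (1::real) / 2 ^ (k + 1)" by simp
  then have s: "2 * h^2 \<le> s" "s \<le> 1/2" "0 < s"
    using window_one_minus_bounds window_scale_bounds unfolding s_def by linarith+
  have s': "s \<le> 1 - x^2" "1 - x^2 \<le> 2 * s"
    using one_minus_square_bounds[of x] window_in_domain unfolding s_def by auto
  have \<phi>: "0 \<le> phi x" "phi x \<le> 1" "sqrt (1 / 2 ^ (k + 1)) \<le> phi x"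
    using s s' window_weight_bounds unfolding phi_def by (auto simp: power2_eq_square)
  have "h \<le> 1"
  proof (rule ccontr)
    assume "\<not> h \<le> 1"
    then have "1 < h * h" by (simp add: less_1_mult)
    then show False using s by (simp add: power2_eq_square)
  qed
  then show "-1 \<le> x - h * phi x / 2"
    using \<phi> h window_in_domain mult_mono[of h 1 "phi x" 1] by auto
  have "phi x \<le> 2 * s / h" unfolding phi_def
  proof (rule real_le_lsqrt)
    have "2 * s * h^2 \<le> 2 * s * (2 * s)" using s by (intro mult_left_mono) auto
    then have "2 * s \<le> (2 * s / h)^2" using h by (simp add: power_divide divide_simps power2_eq_square)
    then show "1 - x^2 \<le> (2 * s / h)^2" using s' by linarith
  qed (use s h in auto)
  then show "x + h * phi x / 2 \<le> 1" using h unfolding s_def by (simp add: divide_simps mult.commute)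
  show "dyadic_knot k \<le> x + h * phi x / 2" using x \<phi> h by (simp add: add_increasing2)
  have "window_length h k \<le> h * phi x / 2" unfolding window_length_def using \<phi> h by (simp add: divide_simps)
  then show "x - h * phi x / 2 < dyadic_knot k" using x by simp
qed

lemma staircase_jump_le_Delta1:
  assumes "\<alpha> > 0" "k \<le> N"
  shows "staircase_jump \<alpha> k \<le> Delta1 (h * phi x) (staircase \<alpha> N) x"
proof -
  let ?ind = "\<lambda>j y. if dyadic_knot j \<le> y then 1 else (0::real)"
  have "Delta1 (h * phi x) (staircase \<alpha> N) x
      = (\<Sum>j\<in>{1..N}. staircase_jump \<alpha> j * (?ind j (x + h * phi x / 2) - ?ind j (x - h * phi x / 2)))"
    using window_straddles_knot unfolding Delta1_def staircase_def
    by (simp add: sum_subtractf[symmetric] algebra_simps)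
  also have "\<dots> \<ge> staircase_jump \<alpha> k * (?ind k (x + h * phi x / 2) - ?ind k (x - h * phi x / 2))"
    using assms k window_straddles_knot staircase_jump_nonneg by (intro member_le_sum) auto
  finally show ?thesis using window_straddles_knot by simp
qed

lemma window_weight_ge: "2 powr (- real k * \<beta>) * min (2 powr (-\<beta>)) (2 powr \<beta>) \<le> wbb \<beta> x"
proof -
  have "(1::real) / 2 ^ (k + 1) = 2 powr (- real k - 1)" "(2::real) / 2 ^ k = 2 powr (1 - real k)"
    by (simp_all add: powr_diff powr_minus powr_realpow divide_simps)
  moreover have "(- real k - 1) * \<beta> = - real k * \<beta> + (-\<beta>)" "(1 - real k) * \<beta> = - real k * \<beta> + \<beta>"
    by (simp_all add: algebra_simps)
  ultimately have "(1 / 2 ^ (k + 1)) powr \<beta> = 2 powr (- real k * \<beta> + (-\<beta>))"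
    "(2 / 2 ^ k) powr \<beta> = 2 powr (- real k * \<beta> + \<beta>)"
    by (simp_all only: powr_powr)
  then have "(1 / 2 ^ (k + 1)) powr \<beta> = 2 powr (- real k * \<beta>) * 2 powr (-\<beta>)"
    "(2 / 2 ^ k) powr \<beta> = 2 powr (- real k * \<beta>) * 2 powr \<beta>"
    by (simp_all only: powr_add)
  moreover have "min ((1 / 2 ^ (k + 1)) powr \<beta>) ((2 / 2 ^ k) powr \<beta>) \<le> wbb \<beta> x"
    unfolding wbb_def by (rule powr_between_endpoints(1)) (use window_weight_bounds in auto)
  ultimately show ?thesis by (simp add: min_mult_distrib_left)
qed

text \<open>The weight \<open>\<approx> 2 powr (-k\<beta>)\<close> times the jump \<open>\<approx> 2 powr (k\<alpha>)\<close> gives \<open>2 powr (k / (2 q))\<close>.\<close>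
lemma weighted_Delta1_staircase_ge:
  fixes q \<beta> :: real
  assumes q: "q > 0" and \<beta>: "\<beta> > -1 / (2 * q)" and "k \<le> N"
  shows "sqrt (2 ^ k) * (min (2 powr (-\<beta>)) (2 powr \<beta>) * (1 - 2 powr (-(\<beta> + 1 / (2 * q))))) powr q
     \<le> \<bar>wbb \<beta> x * Delta1 (h * phi x) (staircase (\<beta> + 1 / (2 * q)) N) x\<bar> powr q"
proof -
  define \<alpha> where "\<alpha> = \<beta> + 1 / (2 * q)"
  define m where "m = min (2 powr (-\<beta>)) (2 powr \<beta>)"
  define e where "e = 1 - 2 powr (-\<alpha>)"
  have \<alpha>: "\<alpha> > 0" unfolding \<alpha>_def using \<beta> by simp
  have me: "m > 0" "e > 0" unfolding m_def e_def using \<alpha> by (simp_all add: powr_minus divide_simps)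
  have "staircase_jump \<alpha> k = 2 powr (real k * \<alpha>) * e"
    unfolding staircase_jump_eq[OF \<alpha> k] e_def by (simp add: powr_realpow[symmetric] powr_powr)
  then have "2 powr (- real k * \<beta>) * m * (2 powr (real k * \<alpha>) * e)
      \<le> \<bar>wbb \<beta> x * Delta1 (h * phi x) (staircase \<alpha> N) x\<bar>"
    using window_weight_ge[of \<beta>] staircase_jump_le_Delta1[OF \<alpha> \<open>k \<le> N\<close>] me
    unfolding m_def abs_mult by (intro mult_mono) auto
  also have "2 powr (- real k * \<beta>) * m * (2 powr (real k * \<alpha>) * e) = 2 powr (real k / (2 * q)) * (m * e)"
    by (simp add: \<alpha>_def algebra_simps flip: powr_add)
  finally have "(2 powr (real k / (2 * q)) * (m * e)) powr q
      \<le> \<bar>wbb \<beta> x * Delta1 (h * phi x) (staircase \<alpha> N) x\<bar> powr q"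
    using me q by (intro powr_mono2) auto
  moreover have "(2 powr (real k / (2 * q)) * (m * e)) powr q = sqrt (2 ^ k) * (m * e) powr q"
    using me q by (simp add: powr_mult powr_powr powr_half_sqrt[symmetric] powr_realpow[symmetric])
  ultimately show ?thesis unfolding m_def e_def \<alpha>_def by simp
qed

end

lemma nn_integral_modulus_staircase_ge:
  fixes q \<beta> h :: real
  assumes q: "q > 0" and \<beta>: "\<beta> > -1 / (2 * q)" and h: "0 < h" and hN: "2 ^ N * (4 * h^2) \<le> 1"
  defines "c \<equiv> (min (2 powr (-\<beta>)) (2 powr \<beta>) * (1 - 2 powr (-(\<beta> + 1 / (2 * q))))) powr q"
  shows "ennreal (real N * (c * (h / (2 * sqrt 2))))
    \<le> (\<integral>\<^sup>+ x. indicator {-1 + 2 * h^2 .. 1 - 2 * h^2} x *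
          ennreal (\<bar>wbb \<beta> x * Delta1 (h * phi x) (staircase (\<beta> + 1 / (2 * q)) N) x\<bar> powr q) \<partial>lborel)"
    (is "_ \<le> (\<integral>\<^sup>+ x. ?F x \<partial>lborel)")
proof -
  define I where "I k = {dyadic_knot k ..< dyadic_knot k + window_length h k}" for k
  define a where "a k = ennreal (sqrt (2 ^ k) * c)" for k
  have c: "c \<ge> 0" unfolding c_def by simp
  have hk: "2 ^ k * (4 * h^2) \<le> 1" if "k \<le> N" for k
    using hN mult_right_mono[of "(2::real) ^ k" "2 ^ N" "4 * h^2"] power_increasing[OF that, of "2::real"]
    by auto
  have disj: "disjoint_family_on I {1..N}"
  proof -
    have "I j \<inter> I k = {}" if "j \<in> {1..N}" "k \<in> {1..N}" "j < k" for j k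
      using windows_disjoint[OF h hk hk \<open>j < k\<close>] that unfolding I_def by auto
    then show ?thesis
      unfolding disjoint_family_on_def by (metis Int_commute linorder_neqE_nat)
  qed
  have "ennreal (real N * (c * (h / (2 * sqrt 2)))) = (\<Sum>k\<in>{1..N}. a k * emeasure lborel (I k))"
  proof -
    have "sqrt (2 ^ k) * window_length h k = h / (2 * sqrt 2)" for k
      unfolding window_length_def
      by (simp add: real_sqrt_divide real_sqrt_mult[symmetric] field_simps)
    moreover have "a k * emeasure lborel (I k) = ennreal (c * (sqrt (2 ^ k) * window_length h k))" for k
      unfolding a_def I_def using c h
      by (simp add: window_length_def ennreal_mult[symmetric] mult_ac)
    ultimately have "a k * emeasure lborel (I k) = ennreal (c * (h / (2 * sqrt 2)))" for k
      by simp
    then show ?thesis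
      using c h by (simp add: ennreal_of_nat_eq_real_of_nat ennreal_mult'[symmetric] mult.assoc)
  qed
  also have "\<dots> = (\<integral>\<^sup>+ x. (\<Sum>k\<in>{1..N}. a k * indicator (I k) x) \<partial>lborel)"
    unfolding I_def by (subst nn_integral_sum) (auto simp: nn_integral_cmult_indicator)
  also have "\<dots> \<le> (\<integral>\<^sup>+ x. ?F x \<partial>lborel)"
  proof (rule nn_integral_mono)
    fix x :: real
    show "(\<Sum>k\<in>{1..N}. a k * indicator (I k) x) \<le> ?F x"
    proof (cases "\<exists>k\<in>{1..N}. x \<in> I k")
      case True
      then obtain k where k: "k \<in> {1..N}" "x \<in> I k" by blast
      then have x: "dyadic_knot k \<le> x" "x < dyadic_knot k + window_length h k"
        unfolding I_def by auto
      have "(\<Sum>k\<in>{1..N}. a k * indicator (I k) x) = a k"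
        using sum_indicator_disjoint_family[OF disj k(2) _ k(1)] by simp
      also have "\<dots> \<le> ?F x"
        using weighted_Delta1_staircase_ge[OF h _ hk x q \<beta>] window_in_domain[OF h _ hk x] k
        unfolding a_def c_def by (auto intro: ennreal_leI)
      finally show ?thesis .
    qed (auto simp: indicator_def)
  qed
  finally show ?thesis .
qed

lemma nn_integral_modulus_staircase_finite:
  fixes q \<beta> h :: real
  assumes q: "q > 0" and \<beta>: "\<beta> > -1 / (2 * q)" and h: "0 < h"
  shows "(\<integral>\<^sup>+ x. indicator {-1 + 2 * h^2 .. 1 - 2 * h^2} x *
          ennreal (\<bar>wbb \<beta> x * Delta1 (h * phi x) (staircase (\<beta> + 1 / (2 * q)) N) x\<bar> powr q) \<partial>lborel) < \<infinity>"
proof -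
  define \<alpha> where "\<alpha> = \<beta> + 1 / (2 * q)"
  define S where "S = {-1 + 2 * h^2 .. 1 - 2 * h^2}"
  define B where "B = (max ((2 * h^2) powr \<beta>) (1 powr \<beta>) * (2 ^ N) powr \<alpha>) powr q"
  have \<alpha>: "\<alpha> > 0" unfolding \<alpha>_def using \<beta> by simp
  have "(\<integral>\<^sup>+ x. indicator S x * ennreal (\<bar>wbb \<beta> x * Delta1 (h * phi x) (staircase \<alpha> N) x\<bar> powr q) \<partial>lborel)
      \<le> (\<integral>\<^sup>+ x. ennreal B * indicator S x \<partial>lborel)"
  proof (rule nn_integral_mono)
    fix x
    show "indicator S x * ennreal (\<bar>wbb \<beta> x * Delta1 (h * phi x) (staircase \<alpha> N) x\<bar> powr q)
        \<le> ennreal B * indicator S x"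
    proof (cases "x \<in> S")
      case True
      then have "2 * h^2 \<le> 1 - \<bar>x\<bar>" unfolding S_def by auto
      moreover have "1 - \<bar>x\<bar> \<le> 1 - x^2"
        using one_minus_square_bounds(1)[of "\<bar>x\<bar>"] calculation zero_le_power2[of h] by simp
      ultimately have "wbb \<beta> x \<le> max ((2 * h^2) powr \<beta>) (1 powr \<beta>)"
        unfolding wbb_def using h by (intro powr_between_endpoints(2)) auto
      moreover have "\<bar>Delta1 (h * phi x) (staircase \<alpha> N) x\<bar> \<le> (2 ^ N) powr \<alpha>"
        using staircase_nonneg[OF \<alpha>] staircase_le[OF \<alpha>] unfolding Delta1_def abs_le_iff
        by (smt (verit) powr_ge_zero)
      ultimately have "\<bar>wbb \<beta> x * Delta1 (h * phi x) (staircase \<alpha> N) x\<bar>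
          \<le> max ((2 * h^2) powr \<beta>) (1 powr \<beta>) * (2 ^ N) powr \<alpha>"
        unfolding abs_mult by (intro mult_mono) (auto simp: wbb_def)
      then show ?thesis using True q unfolding B_def by (auto intro!: ennreal_leI powr_mono2)
    qed simp
  qed
  also have "\<dots> = ennreal B * emeasure lborel S"
    unfolding S_def by (rule nn_integral_cmult_indicator) simp
  also have "\<dots> < \<infinity>"
    unfolding S_def emeasure_lborel_Icc_eq by (simp add: ennreal_mult_less_top del: ennreal_eq_0_iff)
  finally show ?thesis unfolding S_def \<alpha>_def .
qed

lemma modulus_staircase_Lq_norm_ge:
  fixes q \<beta> :: real
  assumes q: "q > 0" and \<beta>: "\<beta> > -1 / (2 * q)"
  obtains c where "c > 0"
    and "\<And>h N. 0 < h \<Longrightarrow> 2 ^ N * (4 * h^2) \<le> 1 \<Longrightarrow> (c * N * h) powr (1 / q)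
      \<le> Lq_norm q {-1 + 2 * h^2 .. 1 - 2 * h^2}
           (\<lambda>x. wbb \<beta> x * Delta1 (h * phi x) (staircase (\<beta> + 1 / (2 * q)) N) x)"
proof
  define c1 where "c1 = (min (2 powr (-\<beta>)) (2 powr \<beta>) * (1 - 2 powr (-(\<beta> + 1 / (2 * q))))) powr q"
  have "2 powr (-(\<beta> + 1 / (2 * q))) < 1" using \<beta> by (intro powr_less_one) auto
  then have "0 < min (2 powr (-\<beta>)) (2 powr \<beta>) * (1 - 2 powr (-(\<beta> + 1 / (2 * q))))"
    by simp
  then have "c1 > 0" unfolding c1_def using powr_gt_zero by (metis order_less_irrefl)
  then show c1: "c1 / (2 * sqrt 2) > 0" by simp
  fix h :: real and N :: nat assume h: "0 < h" and hN: "2 ^ N * (4 * h^2) \<le> 1"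
  show "(c1 / (2 * sqrt 2) * N * h) powr (1 / q)
      \<le> Lq_norm q {-1 + 2 * h^2 .. 1 - 2 * h^2}
           (\<lambda>x. wbb \<beta> x * Delta1 (h * phi x) (staircase (\<beta> + 1 / (2 * q)) N) x)"
    using nn_integral_modulus_staircase_ge[OF q \<beta> h hN] nn_integral_modulus_staircase_finite[OF q \<beta> h]
      c1 h q unfolding c1_def
    by (intro Lq_norm_ge_powr) (auto simp: algebra_simps)
qed

subsection \<open>The lower bound for the modulus\<close>

lemma divide_Lq_norm_in_Bsphere:
  assumes "p > 0" and [measurable]: "g \<in> borel_measurable borel"
    and "0 < Lq_norm p {-1..1} (\<lambda>x. wbb \<beta> x * g x)"
  shows "(\<lambda>x. g x / Lq_norm p {-1..1} (\<lambda>x. wbb \<beta> x * g x)) \<in> Bsphere p \<beta>"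
  using Lq_norm_divide[OF assms(3,1), of "\<lambda>x. wbb \<beta> x * g x" "{-1..1}"] assms(3)
  unfolding Bsphere_def by simp

lemma divide_staircase_in_Mplus1:
  assumes "\<alpha> > 0" "M > 0"
  shows "(\<lambda>x. staircase \<alpha> N x / M) \<in> Mplus1"
  unfolding Mplus1_def using staircase_mono[OF assms(1)] staircase_eq_0 assms(2)
  by (auto intro!: mono_onI divide_right_mono)

lemma Omega1_divide_ge:
  assumes "0 < \<delta>" "M > 0" "q > 0"
    and [measurable]: "w \<in> borel_measurable borel" "g \<in> borel_measurable borel"
  shows "ereal (Lq_norm q {-1 + 2 * \<delta>^2 .. 1 - 2 * \<delta>^2} (\<lambda>x. w x * Delta1 (\<delta> * phi x) g x) / M)
    \<le> Omega1 q w (\<lambda>x. g x / M) \<delta>"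
proof -
  have "Lq_norm q {-1 + 2 * \<delta>^2 .. 1 - 2 * \<delta>^2} (\<lambda>x. w x * Delta1 (\<delta> * phi x) (\<lambda>x. g x / M) x)
      = Lq_norm q {-1 + 2 * \<delta>^2 .. 1 - 2 * \<delta>^2} (\<lambda>x. w x * Delta1 (\<delta> * phi x) g x) / M"
    unfolding Delta1_divide using assms by (simp add: Lq_norm_divide[symmetric])
  then show ?thesis unfolding Omega1_def using assms(1) by (auto intro!: SUP_upper2[of \<delta>])
qed

lemma exists_dyadic_level:
  fixes \<delta> :: real
  assumes "0 < \<delta>" "\<delta> < 1/4"
  obtains N :: nat where "1 \<le> N" "2 ^ N * (4 * \<delta>^2) \<le> 1" "\<bar>ln \<delta>\<bar> / (2 * ln 2) \<le> N"
proof
  define L where "L = - log 2 \<delta>"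
  define N where "N = nat \<lfloor>2 * L - 2\<rfloor>"
  have "log 2 \<delta> < log 2 (2 powr (-2))" using assms by (simp add: powr_minus)
  then have L: "L > 2" unfolding L_def by simp
  then have N: "2 * L - 3 \<le> real N" "real N \<le> 2 * L - 2"
    unfolding N_def by linarith+
  show "1 \<le> N" using N L by linarith
  have "(2::real) ^ N \<le> 2 powr (2 * L - 2)"
    using N by (simp add: powr_realpow[symmetric])
  also have "2 powr (2 * L - 2) = 1 / (4 * \<delta>^2)"
  proof -
    have "2 powr (2 * log 2 \<delta>) = (2 powr (log 2 \<delta>)) powr 2" by (simp add: powr_powr mult.commute)
    also have "\<dots> = \<delta> * \<delta>" using assms by (simp add: powr_numeral power2_eq_square)
    finally show ?thesis using assms unfolding L_def
      by (simp add: powr_diff powr_minus power2_eq_square field_simps)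
  qed
  finally show "2 ^ N * (4 * \<delta>^2) \<le> 1" using assms by (simp add: field_simps)
  have "\<bar>ln \<delta>\<bar> / (2 * ln 2) = L / 2"
    using assms unfolding L_def log_def by simp
  then show "\<bar>ln \<delta>\<bar> / (2 * ln 2) \<le> N" using N L by linarith
qed

lemma powr_divide_powr_mono_ge:
  fixes a C q \<delta> l :: real and N :: nat
  assumes "a > 0" "C > 0" "q > 0" "\<delta> > 0" "0 \<le> l" "l \<le> N"
  shows "(a * \<delta>) powr (1 / q) / C powr (1 / (2 * q)) * l powr (1 / (2 * q))
    \<le> (a * N * \<delta>) powr (1 / q) / (C * N) powr (1 / (2 * q))"
proof (cases "N = 0")
  case False
  have "real N powr (1 / q) = real N powr (1 / (2 * q)) * real N powr (1 / (2 * q))"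
    by (simp add: powr_add[symmetric])
  then have eq: "(a * N * \<delta>) powr (1 / q) / (C * N) powr (1 / (2 * q))
      = (a * \<delta>) powr (1 / q) / C powr (1 / (2 * q)) * real N powr (1 / (2 * q))"
    using assms False by (simp add: powr_mult mult_ac)
  have "l powr (1 / (2 * q)) \<le> real N powr (1 / (2 * q))"
    using assms by (intro powr_mono2) auto
  then show ?thesis unfolding eq using assms by (intro mult_left_mono) auto
qed (use assms in simp)

lemma Omega1_staircase_ge:
  fixes q \<beta> :: real
  assumes q: "q > 0" and \<beta>: "\<beta> > -1 / (2 * q)"
  obtains K where "K > 0"
    and "\<And>\<delta>. 0 < \<delta> \<Longrightarrow> \<delta> < 1/4 \<Longrightarrow> \<exists>f \<in> Bsphere (2 * q) \<beta> \<inter> Mplus1.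
      ereal (K * (\<delta> powr (1 / q) * \<bar>ln \<delta>\<bar> powr (1 / (2 * q)))) \<le> Omega1 q (wbb \<beta>) f \<delta>"
proof -
  have p: "2 * q > 0" "\<beta> > -1 / (2 * q)" using q \<beta> by auto
  obtain a where a: "a > 0" and modulus: "\<And>h N. 0 < h \<Longrightarrow> 2 ^ N * (4 * h^2) \<le> 1 \<Longrightarrow>
      (a * N * h) powr (1 / q) \<le> Lq_norm q {-1 + 2 * h^2 .. 1 - 2 * h^2}
        (\<lambda>x. wbb \<beta> x * Delta1 (h * phi x) (staircase (\<beta> + 1 / (2 * q)) N) x)"
    using modulus_staircase_Lq_norm_ge[OF q \<beta>] by blast
  obtain C where C: "C > 0" and norm: "\<And>N. N \<ge> 1 \<Longrightarrow>
      Lq_norm (2 * q) {-1..1} (\<lambda>x. wbb \<beta> x * staircase (\<beta> + 1 / (2 * q)) N x) \<le> (C * N) powr (1 / (2 * q))"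
    using weighted_staircase_norm_le[OF p] by blast
  define K where "K = a powr (1 / q) / C powr (1 / (2 * q)) / (2 * ln 2) powr (1 / (2 * q))"
  show thesis
  proof (rule that)
    show "K > 0" unfolding K_def using a C by simp
    fix \<delta> :: real assume \<delta>: "0 < \<delta>" "\<delta> < 1/4"
    obtain N where N: "1 \<le> N" "2 ^ N * (4 * \<delta>^2) \<le> 1" "\<bar>ln \<delta>\<bar> / (2 * ln 2) \<le> N"
      using exists_dyadic_level[OF \<delta>] by blast
    define g where "g = staircase (\<beta> + 1 / (2 * q)) N"
    define M where "M = Lq_norm (2 * q) {-1..1} (\<lambda>x. wbb \<beta> x * g x)"
    have M: "0 < M" "M \<le> (C * N) powr (1 / (2 * q))"
      unfolding M_def g_def using weighted_staircase_norm_pos[OF p N(1)] norm[OF N(1)] by auto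
    have "K * (\<delta> powr (1 / q) * \<bar>ln \<delta>\<bar> powr (1 / (2 * q)))
        = (a * \<delta>) powr (1 / q) / C powr (1 / (2 * q)) * (\<bar>ln \<delta>\<bar> / (2 * ln 2)) powr (1 / (2 * q))"
    proof -
      have "(\<bar>ln \<delta>\<bar> / (2 * ln 2)) powr (1 / (2 * q)) = \<bar>ln \<delta>\<bar> powr (1 / (2 * q)) / (2 * ln 2) powr (1 / (2 * q))"
        by (rule powr_divide)
      moreover have "(a * \<delta>) powr (1 / q) = a powr (1 / q) * \<delta> powr (1 / q)"
        using a \<delta> by (simp add: powr_mult)
      ultimately show ?thesis unfolding K_def by simp
    qed
    also have "\<dots> \<le> (a * N * \<delta>) powr (1 / q) / (C * N) powr (1 / (2 * q))"
      by (rule powr_divide_powr_mono_ge[OF a C q \<delta>(1) _ N(3)]) simp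
    also have "\<dots> \<le> (a * N * \<delta>) powr (1 / q) / M"
      using M N(1) C by (intro divide_left_mono) auto
    also have "\<dots> \<le> Lq_norm q {-1 + 2 * \<delta>^2 .. 1 - 2 * \<delta>^2} (\<lambda>x. wbb \<beta> x * Delta1 (\<delta> * phi x) g x) / M"
      using modulus[OF \<delta>(1) N(2)] M unfolding g_def by (intro divide_right_mono) auto
    finally have "ereal (K * (\<delta> powr (1 / q) * \<bar>ln \<delta>\<bar> powr (1 / (2 * q))))
        \<le> ereal (Lq_norm q {-1 + 2 * \<delta>^2 .. 1 - 2 * \<delta>^2} (\<lambda>x. wbb \<beta> x * Delta1 (\<delta> * phi x) g x) / M)"
      by simp
    also have "\<dots> \<le> Omega1 q (wbb \<beta>) (\<lambda>x. g x / M) \<delta>"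
      by (rule Omega1_divide_ge[OF \<delta>(1) M(1) q]) (auto simp: g_def)
    finally have "ereal (K * (\<delta> powr (1 / q) * \<bar>ln \<delta>\<bar> powr (1 / (2 * q))))
        \<le> Omega1 q (wbb \<beta>) (\<lambda>x. g x / M) \<delta>" .
    moreover have "(\<lambda>x. g x / M) \<in> Bsphere (2 * q) \<beta> \<inter> Mplus1"
      using divide_Lq_norm_in_Bsphere[OF p(1), of g \<beta>] divide_staircase_in_Mplus1[OF _ M(1)] M(1) \<beta>
      unfolding M_def g_def by auto
    ultimately show "\<exists>f \<in> Bsphere (2 * q) \<beta> \<inter> Mplus1.
        ereal (K * (\<delta> powr (1 / q) * \<bar>ln \<delta>\<bar> powr (1 / (2 * q)))) \<le> Omega1 q (wbb \<beta>) f \<delta>"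
      by blast
  qed
qed

lemma one_less_ln_4: "1 < ln (4::real)"
  using ln_realpow[of 2 2] ln2_ge_two_thirds by simp

lemma ln_ln_4_le:
  fixes \<delta> :: real
  assumes "0 < \<delta>" "\<delta> < 1/4"
  shows "ln (ln 4) \<le> \<bar>ln \<bar>ln \<delta>\<bar>\<bar>"
proof -
  have "ln \<delta> < ln (1/4)" using assms by simp
  then have "ln 4 < \<bar>ln \<delta>\<bar>" by (simp add: ln_div)
  then show ?thesis using one_less_ln_4 by simp
qed

theorem lemma6p8:
  fixes q p \<beta> lam :: real
  assumes "1 \<le> q" and "p = 2 * q" and "\<beta> > - 1 / p" and "lam > 1"
  shows "\<exists>c>0. \<forall>\<delta>. 0 < \<delta> \<and> \<delta> < 1 / 4 \<longrightarrow>
           (\<exists>f \<in> Bsphere p \<beta> \<inter> Mplus1.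
              Omega1 q (wbb \<beta>) f \<delta> \<ge>
                ereal (c * (\<delta> powr (1 / q) * \<bar>ln \<delta>\<bar> powr (1 / (2 * q))
                        / \<bar>ln \<bar>ln \<delta>\<bar>\<bar> powr (lam / (2 * q)))))"
proof -
  have q: "q > 0" and \<beta>: "\<beta> > -1 / (2 * q)" using assms by auto
  obtain K where K: "K > 0" and lower: "\<And>\<delta>. 0 < \<delta> \<Longrightarrow> \<delta> < 1/4 \<Longrightarrow> \<exists>f \<in> Bsphere (2 * q) \<beta> \<inter> Mplus1.
      ereal (K * (\<delta> powr (1 / q) * \<bar>ln \<delta>\<bar> powr (1 / (2 * q)))) \<le> Omega1 q (wbb \<beta>) f \<delta>"
    using Omega1_staircase_ge[OF q \<beta>] by blast
  define D where "D = ln (ln (4::real)) powr (lam / (2 * q))"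
  have D: "D > 0" unfolding D_def using one_less_ln_4 by simp
  show ?thesis
  proof (intro exI[of _ "K * D"] conjI allI impI)
    show "K * D > 0" using K D by simp
    fix \<delta> :: real assume \<delta>: "0 < \<delta> \<and> \<delta> < 1 / 4"
    define T where "T = \<delta> powr (1 / q) * \<bar>ln \<delta>\<bar> powr (1 / (2 * q))"
    define E where "E = \<bar>ln \<bar>ln \<delta>\<bar>\<bar> powr (lam / (2 * q))"
    have "D \<le> E"
      unfolding D_def E_def using ln_ln_4_le[of \<delta>] one_less_ln_4 \<delta> assms(4) q by (intro powr_mono2) auto
    then have "K * T * (D / E) \<le> K * T"
      using K D unfolding T_def by (intro mult_left_le) auto
    then have "K * D * (T / E) \<le> K * T" by (simp add: mult_ac)
    then show "\<exists>f \<in> Bsphere p \<beta> \<inter> Mplus1. Omega1 q (wbb \<beta>) f \<delta> \<ge>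
        ereal (K * D * (\<delta> powr (1 / q) * \<bar>ln \<delta>\<bar> powr (1 / (2 * q)) / \<bar>ln \<bar>ln \<delta>\<bar>\<bar> powr (lam / (2 * q))))"
      using lower[of \<delta>] \<delta> assms(2) unfolding T_def E_def by (meson ereal_less_eq(3) order.trans)
  qed
qed

end
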